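(* Every pair of elements of $\mathrm{SO}(3)$ is strongly doubly reversible.
   Context: A pair $(g_1,g_2)$ in a group $G$ is strongly doubly reversible if there is $g\in G$ with $g^2=1$ such that $g g_1 g^{-1}=g_1^{-1}$ and $g g_2 g^{-1}=g_2^{-1}$. *)

theory Defs
  imports "HOL-Analysis.Analysis"
begin

definition SO3 :: "(real^3^3) set" where
  "SO3 = {A. orthogonal_matrix A \<and> det A = 1}"

definition strongly_doubly_reversible_SO3 :: "real^3^3 \<Rightarrow> real^3^3 \<Rightarrow> bool" where
  "strongly_doubly_reversible_SO3 g1 g2 \<longleftrightarrow>
     (\<exists>g\<in>SO3. g ** g = mat 1 \<and>
        g ** g1 ** matrix_inv g = matrix_inv g1 \<and>
        g ** g2 ** matrix_inv g = matrix_inv g2)"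

end

theory Submission
  imports Defs
begin

(* A rotation A of R^3 has an axis: det (A - 1) = det (A (1 - A^T)) = det (1 - A) = - det (A - 1).
   A rotation of R^3 reversing a nonzero vector a fixes an axis b orthogonal to a, hence also
   reverses a x b, so it is an involution. Therefore, if A fixes a and the rotation g reverses a,
   then (A g)^2 = 1, i.e. g A g = A^-1. For g1, g2 with axes a1, a2, the half-turn
   g = 2 u u^T - 1 about a unit vector u orthogonal to both is the required involution. *)

lemma matrix_diff_ldistrib:
  fixes A :: "'a::ring_1^'n^'m"
  shows "A ** (B - C) = A ** B - A ** C"
  by (simp add: matrix_matrix_mult_def vec_eq_iff right_diff_distrib sum_subtractf)

lemma matrix_vector_mult_uminus_right:
  fixes A :: "'a::ring_1^'n^'m"
  shows "A *v (- x) = - (A *v x)"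
  by (simp add: matrix_vector_mult_def vec_eq_iff sum_negf)

lemma det_uminus:
  fixes A :: "'a::comm_ring_1^'n^'n"
  shows "det (- A) = (-1) ^ CARD('n) * det A"
proof -
  have "- A = (\<chi> i. (-1) *s A $ i)"
    by (simp add: vec_eq_iff)
  then show ?thesis
    by (simp add: det_rows_mul)
qed

lemma orthogonal_matrix_inner:
  fixes A :: "real^'n^'n"
  assumes "orthogonal_matrix A"
  shows "(A *v x) \<bullet> (A *v y) = x \<bullet> y"
proof -
  have "(A *v x) \<bullet> (A *v y) = (x v* transpose A) \<bullet> (A *v y)"
    by simp
  also have "\<dots> = x \<bullet> (transpose A *v (A *v y))"
    by (rule dot_lmul_matrix)
  also have "transpose A *v (A *v y) = y"
    using assms by (simp add: matrix_vector_mul_assoc orthogonal_matrix_def)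
  finally show ?thesis .
qed

lemma matrix_inv_unique:
  fixes A :: "'a::semiring_1^'n^'m"
  assumes "A ** B = mat 1" and "B ** A = mat 1"
  shows "matrix_inv A = B"
proof -
  have inv: "A ** matrix_inv A = mat 1 \<and> matrix_inv A ** A = mat 1"
    unfolding matrix_inv_def by (rule someI[of _ B]) (use assms in blast)
  have "matrix_inv A = matrix_inv A ** (A ** B)"
    using assms by simp
  also have "\<dots> = B"
    using inv by (simp add: matrix_mul_assoc)
  finally show ?thesis .
qed

lemma matrix_inv_orthogonal_matrix:
  fixes A :: "real^'n^'n"
  assumes "orthogonal_matrix A"
  shows "matrix_inv A = transpose A"
  using assms by (intro matrix_inv_unique) (simp_all add: orthogonal_matrix_def)

lemma exists_unit_orthogonal_to_two:
  fixes a b :: "'a::euclidean_space"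
  assumes "2 < DIM('a)"
  obtains u where "norm u = 1" and "u \<bullet> a = 0" and "u \<bullet> b = 0"
proof -
  have "dim {a, b} \<le> card {a, b}"
    by (rule dim_le_card) (auto intro: span_base)
  also have "\<dots> \<le> 2"
    by (simp add: card_insert_le_m1)
  finally obtain v where "v \<noteq> 0" and "\<And>y. y \<in> span {a, b} \<Longrightarrow> orthogonal v y"
    using assms orthogonal_to_subspace_exists[of "{a, b}"] by auto
  then have "v \<bullet> a = 0" and "v \<bullet> b = 0"
    by (simp_all add: orthogonal_def span_base)
  then show ?thesis
    using that[of "v /\<^sub>R norm v"] \<open>v \<noteq> 0\<close> by simp
qed

lemma span_orthogonal_cross3:
  fixes a b :: "real^3"
  assumes "a \<noteq> 0" and "b \<noteq> 0" and "a \<bullet> b = 0"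
  shows "span {a, b, cross3 a b} = UNIV"
proof -
  let ?c = "cross3 a b"
  have "(norm ?c)\<^sup>2 = (norm a * norm b)\<^sup>2"
    using norm_cross_dot[of a b] assms(3) by simp
  then have "?c \<noteq> 0"
    using assms by auto
  have "a \<bullet> ?c = 0" and "b \<bullet> ?c = 0"
    by (simp_all add: dot_cross_self)
  then have "pairwise orthogonal {a, b, ?c}"
    using assms(3) by (auto simp: pairwise_def orthogonal_def inner_commute)
  then have "independent {a, b, ?c}"
    by (rule pairwise_orthogonal_independent) (use assms \<open>?c \<noteq> 0\<close> in auto)
  moreover have "card {a, b, ?c} = 3"
  proof -
    have "a \<noteq> b" and "a \<noteq> ?c" and "b \<noteq> ?c"
      using assms \<open>a \<bullet> ?c = 0\<close> \<open>b \<bullet> ?c = 0\<close> by (metis inner_eq_zero_iff)+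
    then show ?thesis
      by simp
  qed
  ultimately have "dim {a, b, ?c} = DIM(real^3)"
    by (simp add: dim_eq_card_independent)
  then show ?thesis
    using dim_eq_full by blast
qed

lemma rotation_matrix_fixes_nonzero_vector:
  fixes A :: "real^'n^'n"
  assumes "rotation_matrix A" and "odd CARD('n)"
  obtains v where "v \<noteq> 0" and "A *v v = v"
proof -
  have "A ** transpose A = mat 1" and "det A = 1"
    using assms by (auto simp: rotation_matrix_def orthogonal_matrix_def)
  then have "A - mat 1 = A ** (mat 1 - transpose A)"
    by (simp add: matrix_diff_ldistrib)
  also have "mat 1 - transpose A = transpose (mat 1 - A)"
    by (simp add: transpose_def mat_def vec_eq_iff)
  finally have "det (A - mat 1) = det (transpose (mat 1 - A))"
    by (simp add: det_mul \<open>det A = 1\<close>)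
  also have "\<dots> = det (- (A - mat 1))"
    by simp
  also have "\<dots> = - det (A - mat 1)"
    using assms(2) det_uminus[of "A - mat 1"] by simp
  finally have "det (A - mat 1) = 0"
    by simp
  then obtain v where "v \<noteq> 0" and "(A - mat 1) *v v = 0"
    using matrix_nonfull_linear_equations_eq det_eq_0_rank by (metis less_irrefl)
  then show ?thesis
    using that by (simp add: matrix_vector_mult_diff_rdistrib)
qed

lemma rotation_matrix_reversing_vector_involution:
  fixes M :: "real^3^3"
  assumes M: "rotation_matrix M" and "a \<noteq> 0" and "M *v a = - a"
  shows "M ** M = mat 1"
proof -
  obtain b where "b \<noteq> 0" and "M *v b = b"
    using rotation_matrix_fixes_nonzero_vector[OF M] by auto
  have "b \<bullet> a = (M *v b) \<bullet> (M *v a)"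
    using M by (simp add: rotation_matrix_def orthogonal_matrix_inner)
  also have "\<dots> = - (b \<bullet> a)"
    using assms \<open>M *v b = b\<close> by simp
  finally have "a \<bullet> b = 0"
    by (simp add: inner_commute)
  have "M *v cross3 a b = - cross3 a b"
    using cross_rotation_matrix[OF M, of a b] assms \<open>M *v b = b\<close> by simp
  have "(M ** M) *v x = x" if "x \<in> span {a, b, cross3 a b}" for x
  proof (rule real_vector.linear_eq_on[OF matrix_vector_mul_linear linear_ident that])
    show "(M ** M) *v v = v" if "v \<in> {a, b, cross3 a b}" for v
      using that assms \<open>M *v b = b\<close> \<open>M *v cross3 a b = - cross3 a b\<close>
      by (auto simp: matrix_vector_mul_assoc[symmetric] matrix_vector_mult_uminus_right)
  qed
  then show ?thesis
    using span_orthogonal_cross3[OF assms(2) \<open>b \<noteq> 0\<close> \<open>a \<bullet> b = 0\<close>] by (simp add: matrix_eq)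
qed

lemma rotation_matrix_conj_axis_reversal:
  fixes A g :: "real^3^3"
  assumes A: "rotation_matrix A" and g: "rotation_matrix g"
    and "a \<noteq> 0" and "A *v a = a" and "g *v a = - a"
  shows "g ** A ** g = transpose A"
proof -
  have "rotation_matrix (A ** g)"
    using A g by (auto simp: rotation_matrix_def orthogonal_matrix_mul det_mul)
  moreover have "(A ** g) *v a = - a"
    using assms by (simp add: matrix_vector_mul_assoc[symmetric] matrix_vector_mult_uminus_right)
  ultimately have "(A ** g) ** (A ** g) = mat 1"
    using \<open>a \<noteq> 0\<close> rotation_matrix_reversing_vector_involution by blast
  then have "transpose A = (transpose A ** A) ** (g ** A ** g)"
    by (metis matrix_mul_assoc matrix_mul_rid)
  also have "transpose A ** A = mat 1"
    using A by (simp add: rotation_matrix_def orthogonal_matrix_def)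
  finally show ?thesis
    by simp
qed

definition half_turn :: "real^'n \<Rightarrow> real^'n^'n" where
  "half_turn u = (\<chi> i j. 2 * u $ i * u $ j) - mat 1"

lemma half_turn_apply: "half_turn u *v x = (2 * (u \<bullet> x)) *\<^sub>R u - x"
proof -
  have "(\<chi> i j. 2 * u $ i * u $ j) *v x = (2 * (u \<bullet> x)) *\<^sub>R u"
    by (simp add: matrix_vector_mult_def vec_eq_iff inner_vec_def sum_distrib_left algebra_simps)
  then show ?thesis
    by (simp add: half_turn_def matrix_vector_mult_diff_rdistrib)
qed

lemma half_turn_reverses_orthogonal: "u \<bullet> x = 0 \<Longrightarrow> half_turn u *v x = - x"
  by (simp add: half_turn_apply)

lemma transpose_half_turn: "transpose (half_turn u) = half_turn u"
  by (simp add: half_turn_def transpose_def mat_def vec_eq_iff mult.commute)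

lemma half_turn_involution:
  assumes "norm u = 1"
  shows "half_turn u ** half_turn u = mat 1"
proof -
  have "u \<bullet> u = 1"
    using assms by (simp add: dot_square_norm)
  then have "u \<bullet> (half_turn u *v x) = u \<bullet> x" for x
    by (simp add: half_turn_apply inner_diff_right)
  then have "half_turn u *v (half_turn u *v x) = x" for x
    by (simp add: half_turn_apply[of u "half_turn u *v x"]) (simp add: half_turn_apply)
  then show ?thesis
    by (simp add: matrix_eq matrix_vector_mul_assoc)
qed

lemma rotation_matrix_half_turn:
  fixes u :: "real^3"
  assumes "norm u = 1"
  shows "rotation_matrix (half_turn u)"
proof -
  have "u \<bullet> u = 1"
    using assms by (simp add: dot_square_norm)
  then have "u $ 1 * u $ 1 + u $ 2 * u $ 2 + u $ 3 * u $ 3 = 1"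
    by (simp add: inner_vec_def sum_3)
  then have "det (half_turn u) = 1"
    by (simp add: det_3 half_turn_def mat_def) algebra
  then show ?thesis
    using half_turn_involution[OF assms]
    by (simp add: rotation_matrix_def orthogonal_matrix_def transpose_half_turn)
qed

lemma half_turn_conj_rotation_matrix:
  fixes A :: "real^3^3"
  assumes A: "rotation_matrix A" and "norm u = 1"
    and "a \<noteq> 0" and "A *v a = a" and "u \<bullet> a = 0"
  shows "half_turn u ** A ** matrix_inv (half_turn u) = matrix_inv A"
proof -
  have "matrix_inv (half_turn u) = half_turn u"
    using half_turn_involution[OF \<open>norm u = 1\<close>] by (simp add: matrix_inv_unique)
  moreover have "half_turn u ** A ** half_turn u = transpose A"
    using A rotation_matrix_half_turn[OF \<open>norm u = 1\<close>] \<open>a \<noteq> 0\<close> \<open>A *v a = a\<close>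
      half_turn_reverses_orthogonal[OF \<open>u \<bullet> a = 0\<close>]
    by (rule rotation_matrix_conj_axis_reversal)
  ultimately show ?thesis
    using A by (simp add: matrix_inv_orthogonal_matrix rotation_matrix_def)
qed

theorem corollary3p4:
  assumes "g1 \<in> SO3" and "g2 \<in> SO3"
  shows "strongly_doubly_reversible_SO3 g1 g2"
proof -
  have r1: "rotation_matrix g1" and r2: "rotation_matrix g2"
    using assms by (simp_all add: SO3_def rotation_matrix_def)
  obtain a1 where "a1 \<noteq> 0" and "g1 *v a1 = a1"
    using rotation_matrix_fixes_nonzero_vector[OF r1] by auto
  obtain a2 where "a2 \<noteq> 0" and "g2 *v a2 = a2"
    using rotation_matrix_fixes_nonzero_vector[OF r2] by auto
  obtain u :: "real^3" where u: "norm u = 1" and "u \<bullet> a1 = 0" and "u \<bullet> a2 = 0"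
    by (rule exists_unit_orthogonal_to_two) auto
  have "half_turn u \<in> SO3"
    using rotation_matrix_half_turn[OF u] by (simp add: SO3_def rotation_matrix_def)
  moreover have "half_turn u ** half_turn u = mat 1"
    using u by (rule half_turn_involution)
  moreover have "half_turn u ** g1 ** matrix_inv (half_turn u) = matrix_inv g1"
    using r1 u \<open>a1 \<noteq> 0\<close> \<open>g1 *v a1 = a1\<close> \<open>u \<bullet> a1 = 0\<close> by (rule half_turn_conj_rotation_matrix)
  moreover have "half_turn u ** g2 ** matrix_inv (half_turn u) = matrix_inv g2"
    using r2 u \<open>a2 \<noteq> 0\<close> \<open>g2 *v a2 = a2\<close> \<open>u \<bullet> a2 = 0\<close> by (rule half_turn_conj_rotation_matrix)
  ultimately show ?thesis
    unfolding strongly_doubly_reversible_SO3_def by blast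
qed

end
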